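(* For each of the Coloring, K-SAT and NAE-K-SAT models, for all positive integers $N,M,m$ and every $0<\delta<1/2$, $$p(N,M+m)\ge\delta^m\,p(N,M)-(2\delta)^{M+1}\exp\big(\mathcal{H}(\delta)N+o(N)\big),$$ where $\mathcal{H}(\delta)=-\delta\log\delta-(1-\delta)\log(1-\delta)$ is the entropy function and the $o(N)$ term depends only on $N$ and $\delta$.
   Context: $\mathbb{G}(N,M)$: random hypergraph on $[N]$ with $M$ directed $K$-hyperedges chosen independently and uniformly from $[N]^K$. $\chi=\{0,\dots,q-1\}$; $H(x)=\sum_{e}H_e(x_e)$, $H(G)=\max_{x\in\chi^N}H(x)$. Models: $q$-Coloring ($K=2$, $H_e(x,y)=\mathbf 1[x\ne y]$); K-SAT ($q=2$, independent uniform $a_e\in\{0,1\}^K$ per hyperedge, $H_e(a_e)=0$, $1$ otherwise); NAE-K-SAT ($q=2$, $H_e(a_e)=H_e(\mathbf1-a_e)=0$, $1$ otherwise). $p(N,M)=\mathbb{P}(H(\mathbb{G}(N,M))=M)$. *)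

theory Defs
  imports "HOL-Library.FuncSet" "HOL-Library.Landau_Symbols" Complex_Main
begin

text \<open>Vertices are 0..N-1, spins/colours are 0..q-1. A directed K-hyperedge is a
map {0..<K} -> {0..<N}; an instance with M hyperedges is a map {0..<M} -> Omega,
where Omega is the (finite) set of possible hyperedges (with their random labels).
Choosing the instance uniformly from this finite set is the same as choosing the
M hyperedges (and labels) independently and uniformly.\<close>

definition hyperedges :: "nat \<Rightarrow> nat \<Rightarrow> (nat \<Rightarrow> nat) set" where
  "hyperedges N K = {0..<K} \<rightarrow>\<^sub>E {0..<N}"

definition configs :: "nat \<Rightarrow> nat \<Rightarrow> (nat \<Rightarrow> nat) set" where
  "configs q N = {0..<N} \<rightarrow>\<^sub>E {0..<q}"

definition Hx :: "('e \<Rightarrow> (nat \<Rightarrow> nat) \<Rightarrow> nat) \<Rightarrow> (nat \<Rightarrow> 'e) \<Rightarrow> nat \<Rightarrow> (nat \<Rightarrow> nat) \<Rightarrow> nat" where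
  "Hx He G M x = (\<Sum>i<M. He (G i) x)"

definition HG :: "('e \<Rightarrow> (nat \<Rightarrow> nat) \<Rightarrow> nat) \<Rightarrow> nat \<Rightarrow> nat \<Rightarrow> (nat \<Rightarrow> 'e) \<Rightarrow> nat \<Rightarrow> nat" where
  "HG He q N G M = Max ((\<lambda>x. Hx He G M x) ` configs q N)"

definition pM :: "'e set \<Rightarrow> ('e \<Rightarrow> (nat \<Rightarrow> nat) \<Rightarrow> nat) \<Rightarrow> nat \<Rightarrow> nat \<Rightarrow> nat \<Rightarrow> real" where
  "pM \<Omega> He q N M =
     real (card {G \<in> {0..<M} \<rightarrow>\<^sub>E \<Omega>. HG He q N G M = M}) / real (card ({0..<M} \<rightarrow>\<^sub>E \<Omega>))"

definition col_He :: "(nat \<Rightarrow> nat) \<Rightarrow> (nat \<Rightarrow> nat) \<Rightarrow> nat" where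
  "col_He e x = (if x (e 0) \<noteq> x (e 1) then 1 else 0)"

definition p_col :: "nat \<Rightarrow> nat \<Rightarrow> nat \<Rightarrow> real" where
  "p_col q N M = pM (hyperedges N 2) col_He q N M"

definition sat_He :: "nat \<Rightarrow> (nat \<Rightarrow> nat) \<times> (nat \<Rightarrow> nat) \<Rightarrow> (nat \<Rightarrow> nat) \<Rightarrow> nat" where
  "sat_He K ea x = (if (\<forall>j<K. x (fst ea j) = snd ea j) then 0 else 1)"

definition p_sat :: "nat \<Rightarrow> nat \<Rightarrow> nat \<Rightarrow> real" where
  "p_sat K N M = pM (hyperedges N K \<times> ({0..<K} \<rightarrow>\<^sub>E {0..<2})) (sat_He K) 2 N M"

definition nae_He :: "nat \<Rightarrow> (nat \<Rightarrow> nat) \<times> (nat \<Rightarrow> nat) \<Rightarrow> (nat \<Rightarrow> nat) \<Rightarrow> nat" where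
  "nae_He K ea x = (if (\<forall>j<K. x (fst ea j) = snd ea j) \<or> (\<forall>j<K. x (fst ea j) = 1 - snd ea j)
                    then 0 else 1)"

definition p_nae :: "nat \<Rightarrow> nat \<Rightarrow> nat \<Rightarrow> real" where
  "p_nae K N M = pM (hyperedges N K \<times> ({0..<K} \<rightarrow>\<^sub>E {0..<2})) (nae_He K) 2 N M"

definition entropy :: "real \<Rightarrow> real" where
  "entropy d = - d * ln d - (1 - d) * ln (1 - d)"

end

theory Submission
  imports Defs "HOL-Real_Asymp.Real_Asymp"
begin

(*
  If an assignment x satisfies at least a \<delta>-fraction of all possible constraints, then every
  instance with M constraints satisfied by x extends, by appending m constraints satisfied by x,
  to at least (\<delta> |\<Omega>|)^m distinct satisfied instances with M + m constraints. Hence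
  p(N, M + m) \<ge> \<delta>^m (p(N, M) - P(G is satisfied by some "bad" assignment)), where bad means
  violating more than a (1 - \<delta>)-fraction of constraints.

  For K-SAT and NAE-K-SAT with K \<ge> 2 there are no bad assignments: on each hyperedge at most
  2 of the 2^K labels are violated. For q-colouring the bad assignments give all but fewer than
  \<delta>N vertices one colour; an instance properly coloured by such an x only uses edges meeting
  the set T of exceptional vertices, at most 2\<delta>N^2 of the N^2 edges, and there are at most
  exp(H(\<delta>) N) such sets T. This gives the error term (2\<delta>)^M exp(H(\<delta>) N).
*)

section \<open>Extending satisfiable instances\<close>

definition sat_instances ::
    "'e set \<Rightarrow> ('e \<Rightarrow> (nat \<Rightarrow> nat) \<Rightarrow> nat) \<Rightarrow> (nat \<Rightarrow> nat) set \<Rightarrow> nat \<Rightarrow> (nat \<Rightarrow> 'e) set" where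
  "sat_instances \<Omega> He X M = {G \<in> {0..<M} \<rightarrow>\<^sub>E \<Omega>. \<exists>x\<in>X. \<forall>i<M. He (G i) x = 1}"

lemma finite_sat_instances: "finite \<Omega> \<Longrightarrow> finite (sat_instances \<Omega> He X M)"
  unfolding sat_instances_def by (simp add: finite_PiE)

lemma sat_instances_mono: "B \<subseteq> X \<Longrightarrow> sat_instances \<Omega> He B M \<subseteq> sat_instances \<Omega> He X M"
  unfolding sat_instances_def by blast

lemma sum_eq_card_iff_all_one:
  fixes f :: "'a \<Rightarrow> nat"
  assumes "finite A" and le1: "\<And>i. i \<in> A \<Longrightarrow> f i \<le> 1"
  shows "sum f A = card A \<longleftrightarrow> (\<forall>i\<in>A. f i = 1)"
proof
  assume sum: "sum f A = card A"
  show "\<forall>i\<in>A. f i = 1"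
  proof (rule ccontr)
    assume "\<not> (\<forall>i\<in>A. f i = 1)"
    then obtain i where "i \<in> A" "f i < 1" using le1 by fastforce
    then have "sum f A < sum (\<lambda>_. 1) A" using assms by (intro sum_strict_mono_ex1) auto
    then show False using sum by simp
  qed
qed simp

lemma Hx_le:
  assumes "\<And>e x. He e x \<le> 1"
  shows "Hx He G M x \<le> M"
  unfolding Hx_def using sum_bounded_above[of "{..<M}" "\<lambda>i. He (G i) x" 1] assms by simp

lemma Hx_eq_iff:
  assumes "\<And>e x. He e x \<le> 1"
  shows "Hx He G M x = M \<longleftrightarrow> (\<forall>i<M. He (G i) x = 1)"
  unfolding Hx_def using sum_eq_card_iff_all_one[of "{..<M}" "\<lambda>i. He (G i) x"] assms by auto

lemma HG_eq_iff:
  assumes le1: "\<And>e x. He e x \<le> 1" and "0 < q"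
  shows "HG He q N G M = M \<longleftrightarrow> (\<exists>x\<in>configs q N. \<forall>i<M. He (G i) x = 1)"
proof -
  have "finite (configs q N)" "configs q N \<noteq> {}"
    using \<open>0 < q\<close> by (auto simp: configs_def finite_PiE PiE_eq_empty_iff)
  then have "HG He q N G M = M \<longleftrightarrow> (\<exists>x\<in>configs q N. Hx He G M x = M)"
    unfolding HG_def using Hx_le[of He, OF le1] by (auto simp: Max_eq_iff; metis image_eqI)
  also have "\<dots> \<longleftrightarrow> (\<exists>x\<in>configs q N. \<forall>i<M. He (G i) x = 1)"
    using Hx_eq_iff[of He, OF le1] by simp
  finally show ?thesis .
qed

lemma pM_eq_card_sat_instances:
  assumes "\<And>e x. He e x \<le> 1" and "0 < q" and "finite \<Omega>"
  shows "pM \<Omega> He q N M = card (sat_instances \<Omega> He (configs q N) M) / card \<Omega> ^ M"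
proof -
  have "{G \<in> {0..<M} \<rightarrow>\<^sub>E \<Omega>. HG He q N G M = M} = sat_instances \<Omega> He (configs q N) M"
    unfolding sat_instances_def using HG_eq_iff[of He, OF assms(1,2)] by auto
  then show ?thesis
    unfolding pM_def using \<open>finite \<Omega>\<close> by (simp add: card_funcsetE)
qed

lemma inj_on_join_instances:
  fixes M m :: nat
  shows "inj_on (\<lambda>(G, h) i. if i < M then G i else h i)
     (({0..<M} \<rightarrow>\<^sub>E A) \<times> ({M..<M+m} \<rightarrow>\<^sub>E B))"
proof (rule inj_onI, clarify)
  fix G h G' h'
  assume G: "G \<in> {0..<M} \<rightarrow>\<^sub>E A" "G' \<in> {0..<M} \<rightarrow>\<^sub>E A"
    and h: "h \<in> {M..<M+m} \<rightarrow>\<^sub>E B" "h' \<in> {M..<M+m} \<rightarrow>\<^sub>E B"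
    and eq: "(\<lambda>i. if i < M then G i else h i) = (\<lambda>i. if i < M then G' i else h' i)"
  have "G i = G' i \<and> h i = h' i" for i
  proof (cases "i < M")
    case True
    then have "i \<notin> {M..<M+m}" by simp
    then show ?thesis using fun_cong[OF eq, of i] PiE_arb[OF h(1)] PiE_arb[OF h(2)] \<open>i < M\<close> by simp
  next
    case False
    then have "i \<notin> {0..<M}" by simp
    then show ?thesis using fun_cong[OF eq, of i] PiE_arb[OF G(1)] PiE_arb[OF G(2)] \<open>\<not> i < M\<close> by simp
  qed
  then show "G = G' \<and> h = h'" by (simp add: fun_eq_iff)
qed

lemma card_sat_instances_add_ge:
  fixes c :: real
  assumes "finite \<Omega>" and "B \<subseteq> X" and "0 \<le> c"
    and good: "\<And>x. x \<in> X - B \<Longrightarrow> c \<le> card {e \<in> \<Omega>. He e x = 1}"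
  shows "c ^ m * (real (card (sat_instances \<Omega> He X M)) - card (sat_instances \<Omega> He B M))
           \<le> card (sat_instances \<Omega> He X (M + m))"
proof -
  define A where "A = sat_instances \<Omega> He X M - sat_instances \<Omega> He B M"
  have fin: "finite (sat_instances \<Omega> He B M)" and sub: "sat_instances \<Omega> He B M \<subseteq> sat_instances \<Omega> He X M"
    using finite_sat_instances[OF \<open>finite \<Omega>\<close>] sat_instances_mono[OF \<open>B \<subseteq> X\<close>] by blast+
  have card_A: "real (card A) = real (card (sat_instances \<Omega> He X M)) - card (sat_instances \<Omega> He B M)"
    unfolding A_def using card_mono[OF finite_sat_instances[OF \<open>finite \<Omega>\<close>] sub]
    by (simp add: card_Diff_subset[OF fin sub] of_nat_diff)
  have "\<forall>G\<in>A. \<exists>x. x \<in> X - B \<and> (\<forall>i<M. He (G i) x = 1)"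
    unfolding A_def sat_instances_def by blast
  then obtain w where w: "\<And>G. G \<in> A \<Longrightarrow> w G \<in> X - B \<and> (\<forall>i<M. He (G i) (w G) = 1)"
    by metis
  define F where "F G = {M..<M+m} \<rightarrow>\<^sub>E {e \<in> \<Omega>. He e (w G) = 1}" for G
  define join where "join = (\<lambda>(G, h) i. if i < M then G i else h i :: 'a)"
  have A_sub: "A \<subseteq> {0..<M} \<rightarrow>\<^sub>E \<Omega>" unfolding A_def sat_instances_def by blast
  have "inj_on join (Sigma A F)"
    unfolding join_def
    by (rule inj_on_subset[OF inj_on_join_instances[where m=m and A=\<Omega> and B=\<Omega>]])
      (use A_sub in \<open>auto simp: F_def PiE_iff extensional_def\<close>)
  moreover have "join ` Sigma A F \<subseteq> sat_instances \<Omega> He X (M + m)"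
  proof clarify
    fix G h assume "G \<in> A" "h \<in> F G"
    then show "join (G, h) \<in> sat_instances \<Omega> He X (M + m)"
      using A_sub w[of G] unfolding sat_instances_def join_def F_def
      by (auto simp: PiE_def Pi_def extensional_def)
  qed
  ultimately have "card (Sigma A F) \<le> card (sat_instances \<Omega> He X (M + m))"
    by (intro card_inj_on_le finite_sat_instances \<open>finite \<Omega>\<close>)
  moreover have "card (Sigma A F) = (\<Sum>G\<in>A. card {e \<in> \<Omega>. He e (w G) = 1} ^ m)"
    using finite_sat_instances[OF \<open>finite \<Omega>\<close>] \<open>finite \<Omega>\<close>
    by (simp add: A_def F_def card_SigmaI finite_PiE card_funcsetE)
  ultimately have "(\<Sum>G\<in>A. real (card {e \<in> \<Omega>. He e (w G) = 1}) ^ m)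
                     \<le> card (sat_instances \<Omega> He X (M + m))"
    by (simp flip: of_nat_power of_nat_sum)
  moreover have "c ^ m * card A \<le> (\<Sum>G\<in>A. real (card {e \<in> \<Omega>. He e (w G) = 1}) ^ m)"
    using sum_mono[of A "\<lambda>_. c ^ m"] good w \<open>0 \<le> c\<close> by (simp add: power_mono mult.commute)
  ultimately show ?thesis
    unfolding card_A[symmetric] by linarith
qed

lemma pM_add_ge:
  fixes \<delta> :: real
  assumes "finite \<Omega>" and "\<Omega> \<noteq> {}" and le1: "\<And>e x. He e x \<le> 1" and "0 < q"
    and "B \<subseteq> configs q N" and \<delta>0: "0 \<le> \<delta>" and \<delta>1: "\<delta> \<le> 1"
    and good: "\<And>x. x \<in> configs q N - B \<Longrightarrow> \<delta> * card \<Omega> \<le> card {e \<in> \<Omega>. He e x = 1}"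
  shows "\<delta> ^ m * pM \<Omega> He q N M - card (sat_instances \<Omega> He B M) / card \<Omega> ^ M
           \<le> pM \<Omega> He q N (M + m)"
proof -
  define w where "w = real (card \<Omega>)"
  define S where "S k = real (card (sat_instances \<Omega> He (configs q N) k))" for k
  define T where "T = real (card (sat_instances \<Omega> He B M))"
  have "w > 0" unfolding w_def using assms(1,2) by (simp add: card_gt_0_iff)
  have "\<delta> ^ m * (T / w ^ M) \<le> T / w ^ M"
    using \<open>w > 0\<close> \<delta>0 \<delta>1 by (intro mult_left_le_one_le) (auto simp: T_def power_le_one)
  then have "\<delta> ^ m * (S M / w ^ M) - T / w ^ M \<le> \<delta> ^ m * (S M / w ^ M) - \<delta> ^ m * (T / w ^ M)"
    by simp
  also have "\<dots> = (\<delta> * w) ^ m * (S M - T) / w ^ (M + m)"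
    using \<open>w > 0\<close> by (simp add: field_simps power_add power_mult_distrib)
  also have "\<dots> \<le> S (M + m) / w ^ (M + m)"
    using card_sat_instances_add_ge[of \<Omega> B "configs q N" "\<delta> * w" He m M] assms good \<open>w > 0\<close>
    by (intro divide_right_mono) (simp_all add: S_def T_def w_def)
  finally show ?thesis
    using pM_eq_card_sat_instances[of He, OF le1 \<open>0 < q\<close> \<open>finite \<Omega>\<close>]
    by (simp add: S_def T_def w_def)
qed

section \<open>K-SAT and NAE-K-SAT\<close>

lemma card_satisfied_ge:
  fixes \<delta> :: real
  assumes "finite \<Omega>" and "\<delta> \<le> 1/2" and "2 * card {e \<in> \<Omega>. He e x \<noteq> 1} \<le> card \<Omega>"
  shows "\<delta> * card \<Omega> \<le> card {e \<in> \<Omega>. He e x = 1}"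
proof -
  have "card {e \<in> \<Omega>. He e x = 1} + card {e \<in> \<Omega>. He e x \<noteq> 1} = card \<Omega>"
    using \<open>finite \<Omega>\<close> by (subst card_Un_disjoint[symmetric]) (auto intro: arg_cong[where f=card])
  then have "real (card \<Omega>) / 2 \<le> card {e \<in> \<Omega>. He e x = 1}"
    using assms(3) by linarith
  moreover have "\<delta> * card \<Omega> \<le> real (card \<Omega>) / 2"
    using mult_right_mono[OF \<open>\<delta> \<le> 1/2\<close>, of "real (card \<Omega>)"] by simp
  ultimately show ?thesis by linarith
qed

abbreviation clauses :: "nat \<Rightarrow> nat \<Rightarrow> ((nat \<Rightarrow> nat) \<times> (nat \<Rightarrow> nat)) set" where
  "clauses N K \<equiv> hyperedges N K \<times> ({0..<K} \<rightarrow>\<^sub>E {0..<2})"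

lemma finite_hyperedges: "finite (hyperedges N K)"
  unfolding hyperedges_def by (simp add: finite_PiE)

lemma hyperedges_nonempty: "0 < N \<Longrightarrow> hyperedges N K \<noteq> {}"
  unfolding hyperedges_def by (auto simp: PiE_eq_empty_iff)

lemma card_clauses: "card (clauses N K) = card (hyperedges N K) * 2 ^ K"
  by (simp add: card_cartesian_product card_funcsetE)

lemma card_nae_violated_le: "card {e \<in> clauses N K. nae_He K e x \<noteq> 1} \<le> 2 * card (hyperedges N K)"
proof -
  define labels where
    "labels f = {restrict (\<lambda>j. x (f j)) {0..<K}, restrict (\<lambda>j. 1 - x (f j)) {0..<K}}" for f
  have "{e \<in> clauses N K. nae_He K e x \<noteq> 1} \<subseteq> Sigma (hyperedges N K) labels"
  proof
    fix e
    assume e: "e \<in> {e \<in> clauses N K. nae_He K e x \<noteq> 1}"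
    obtain f a where fa: "e = (f, a)" by fastforce
    have f: "f \<in> hyperedges N K" and a: "a \<in> {0..<K} \<rightarrow>\<^sub>E {0..<2}" and "nae_He K (f, a) x \<noteq> 1"
      using e fa by auto
    then have "(\<forall>j<K. x (f j) = a j) \<or> (\<forall>j<K. x (f j) = 1 - a j)"
      by (auto simp: nae_He_def split: if_splits)
    moreover have ext: "a \<in> extensional {0..<K}" and "\<And>j. j < K \<Longrightarrow> a j < 2"
      using a by (auto simp: PiE_iff)
    ultimately consider "\<forall>j<K. a j = x (f j)" | "\<forall>j<K. a j = 1 - x (f j)"
      by fastforce
    then have "a = restrict (\<lambda>j. x (f j)) {0..<K} \<or> a = restrict (\<lambda>j. 1 - x (f j)) {0..<K}"
    proof cases
      case 1
      then show ?thesis by (auto intro!: disjI1 extensionalityI[OF ext restrict_extensional])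
    next
      case 2
      then show ?thesis by (auto intro!: disjI2 extensionalityI[OF ext restrict_extensional])
    qed
    then show "e \<in> Sigma (hyperedges N K) labels"
      using f fa by (auto simp: labels_def)
  qed
  then have "card {e \<in> clauses N K. nae_He K e x \<noteq> 1} \<le> card (Sigma (hyperedges N K) labels)"
    by (intro card_mono) (auto simp: labels_def finite_hyperedges)
  also have "\<dots> = (\<Sum>f\<in>hyperedges N K. card (labels f))"
    by (simp add: card_SigmaI finite_hyperedges labels_def)
  also have "\<dots> \<le> (\<Sum>f\<in>hyperedges N K. 2)"
    by (intro sum_mono) (simp add: labels_def card_insert_if)
  finally show ?thesis by simp
qed

lemma card_sat_violated_le: "card {e \<in> clauses N K. sat_He K e x \<noteq> 1} \<le> 2 * card (hyperedges N K)"
proof -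
  have "{e \<in> clauses N K. sat_He K e x \<noteq> 1} \<subseteq> {e \<in> clauses N K. nae_He K e x \<noteq> 1}"
    by (auto simp: sat_He_def nae_He_def split: if_splits)
  then show ?thesis
    using card_nae_violated_le[of N K x] card_mono[of "{e \<in> clauses N K. nae_He K e x \<noteq> 1}"]
      finite_hyperedges by (simp add: finite_PiE) (meson le_trans)
qed

lemma double_le_card_clauses:
  assumes "K \<ge> 2" and "c \<le> 2 * card (hyperedges N K)"
  shows "2 * c \<le> card (clauses N K)"
proof -
  have "(4::nat) \<le> 2 ^ K"
    using power_increasing[OF \<open>K \<ge> 2\<close>, of "2::nat"] by simp
  have "2 * c \<le> 4 * card (hyperedges N K)"
    using assms(2) by simp
  also have "\<dots> \<le> card (hyperedges N K) * 2 ^ K"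
    using \<open>4 \<le> 2 ^ K\<close> by simp
  finally show ?thesis
    unfolding card_clauses .
qed

section \<open>Colouring\<close>

lemma bij_betw_hyperedges_2: "bij_betw (\<lambda>e. (e 0, e 1)) (hyperedges N 2) ({0..<N} \<times> {0..<N})"
proof (rule bij_betwI[where g="\<lambda>(u, v). \<lambda>i\<in>{0..<2}. if i = 0 then u else v"])
  fix e assume "e \<in> hyperedges N 2"
  then have "e \<in> extensional {0..<2}"
    by (simp add: hyperedges_def PiE_iff)
  then have "(\<lambda>i\<in>{0..<2}. if i = 0 then e 0 else e 1) = e"
    by (rule extensionalityI[OF restrict_extensional]) (auto simp: less_2_cases_iff)
  then show "(\<lambda>(u, v). \<lambda>i\<in>{0..<2}. if i = 0 then u else v) (e 0, e 1) = e"
    by (simp only: prod.case)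
qed (auto simp: hyperedges_def PiE_iff Pi_iff)

lemma card_hyperedges_2_filter:
  "card {e \<in> hyperedges N 2. P (e 0) (e 1)} = card {(u, v) \<in> {0..<N} \<times> {0..<N}. P u v}"
proof -
  let ?f = "\<lambda>e. (e 0, e 1)"
  have "?f ` {e \<in> hyperedges N 2. P (e 0) (e 1)} = ?f ` hyperedges N 2 \<inter> {(u, v). P u v}"
    by auto
  then have image: "?f ` {e \<in> hyperedges N 2. P (e 0) (e 1)} = {(u, v) \<in> {0..<N} \<times> {0..<N}. P u v}"
    unfolding bij_betw_imp_surj_on[OF bij_betw_hyperedges_2] by auto
  have "inj_on ?f {e \<in> hyperedges N 2. P (e 0) (e 1)}"
    by (rule inj_on_subset[OF bij_betw_imp_inj_on[OF bij_betw_hyperedges_2]]) blast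
  from card_image[OF this] show ?thesis
    unfolding image by simp
qed

lemma card_hyperedges_2: "card (hyperedges N 2) = N ^ 2"
  unfolding hyperedges_def by (simp add: card_funcsetE)

lemma card_col_satisfied_ge:
  fixes \<delta> :: real
  assumes spread: "\<And>c. \<delta> * N \<le> card {v \<in> {0..<N}. x v \<noteq> c}"
  shows "\<delta> * card (hyperedges N 2) \<le> card {e \<in> hyperedges N 2. col_He e x = 1}"
proof -
  have "card {e \<in> hyperedges N 2. col_He e x = 1} = card {e \<in> hyperedges N 2. x (e 0) \<noteq> x (e 1)}"
    by (rule arg_cong[where f=card]) (auto simp: col_He_def)
  also have "\<dots> = card {(u, v) \<in> {0..<N} \<times> {0..<N}. x u \<noteq> x v}"
    by (rule card_hyperedges_2_filter)
  also have "\<dots> = card (Sigma {0..<N} (\<lambda>u. {v \<in> {0..<N}. x v \<noteq> x u}))"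
    by (rule arg_cong[where f=card]) auto
  also have "\<dots> = (\<Sum>u<N. card {v \<in> {0..<N}. x v \<noteq> x u})"
    by (simp add: card_SigmaI atLeast0LessThan)
  finally have "card {e \<in> hyperedges N 2. col_He e x = 1} = (\<Sum>u<N. card {v \<in> {0..<N}. x v \<noteq> x u})" .
  moreover have "(\<Sum>u<N. \<delta> * N) \<le> (\<Sum>u<N. real (card {v \<in> {0..<N}. x v \<noteq> x u}))"
    using spread by (intro sum_mono) auto
  ultimately show ?thesis
    by (simp add: card_hyperedges_2 power2_eq_square mult_ac)
qed

lemma exp_neg_entropy_le:
  fixes \<delta> :: real and k N :: nat
  assumes "0 < \<delta>" and "\<delta> < 1/2" and "k \<le> N" and "k < \<delta> * N"
  shows "exp (- entropy \<delta> * N) \<le> \<delta> ^ k * (1 - \<delta>) ^ (N - k)"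
proof -
  have "(\<delta> * N - k) * ln \<delta> \<le> (\<delta> * N - k) * ln (1 - \<delta>)"
    using assms by (intro mult_left_mono) auto
  then have "- entropy \<delta> * N \<le> k * ln \<delta> + real (N - k) * ln (1 - \<delta>)"
    unfolding entropy_def using \<open>k \<le> N\<close> by (simp add: of_nat_diff algebra_simps)
  then have "exp (- entropy \<delta> * N) \<le> exp (k * ln \<delta> + real (N - k) * ln (1 - \<delta>))"
    by simp
  also have "\<dots> = \<delta> ^ k * (1 - \<delta>) ^ (N - k)"
    using \<open>0 < \<delta>\<close> \<open>\<delta> < 1/2\<close> by (simp add: exp_add exp_of_nat_mult)
  finally show ?thesis .
qed

text \<open>Each of the binomial terms \<open>(N choose k) \<delta>^k (1 - \<delta>)^(N - k)\<close> of
  \<open>(\<delta> + (1 - \<delta>))^N = 1\<close> with \<open>k < \<delta> N\<close> is at least \<open>(N choose k) exp (- H(\<delta>) N)\<close>.\<close>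
lemma card_small_subsets_le:
  fixes \<delta> :: real and N :: nat
  assumes "0 < \<delta>" and "\<delta> < 1/2"
  shows "card {T. T \<subseteq> {0..<N} \<and> card T < \<delta> * N} \<le> exp (entropy \<delta> * N)"
proof -
  define Ks where "Ks = {k. k \<le> N \<and> k < \<delta> * N}"
  have "{T. T \<subseteq> {0..<N} \<and> card T < \<delta> * N} = (\<Union>k\<in>Ks. {T. T \<subseteq> {0..<N} \<and> card T = k})"
    unfolding Ks_def using card_mono[of "{0..<N}"] by (auto simp flip: of_nat_le_iff)
  then have "card {T. T \<subseteq> {0..<N} \<and> card T < \<delta> * N} \<le> (\<Sum>k\<in>Ks. N choose k)"
    using card_UN_le[of Ks "\<lambda>k. {T. T \<subseteq> {0..<N} \<and> card T = k}"]
    by (simp add: Ks_def n_subsets)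
  then have "card {T. T \<subseteq> {0..<N} \<and> card T < \<delta> * N} * exp (- entropy \<delta> * N)
               \<le> (\<Sum>k\<in>Ks. N choose k) * exp (- entropy \<delta> * N)"
    by (intro mult_right_mono) (simp_all only: of_nat_le_iff exp_ge_zero)
  also have "\<dots> \<le> (\<Sum>k\<in>Ks. (N choose k) * (\<delta> ^ k * (1 - \<delta>) ^ (N - k)))"
    unfolding of_nat_sum sum_distrib_right using exp_neg_entropy_le[OF assms]
    by (intro sum_mono mult_left_mono) (auto simp: Ks_def)
  also have "\<dots> \<le> (\<Sum>k\<le>N. (N choose k) * (\<delta> ^ k * (1 - \<delta>) ^ (N - k)))"
    using assms by (intro sum_mono2) (auto simp: Ks_def)
  also have "\<dots> = (\<delta> + (1 - \<delta>)) ^ N"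
    unfolding binomial_ring by (simp add: mult.assoc)
  finally show ?thesis
    by (simp add: exp_minus field_simps)
qed

lemma card_UN_PiE_le:
  fixes c :: real
  assumes "finite \<T>" and "finite A"
    and "\<And>T. T \<in> \<T> \<Longrightarrow> finite (S T)" and "\<And>T. T \<in> \<T> \<Longrightarrow> card (S T) \<le> c"
  shows "card (\<Union>T\<in>\<T>. A \<rightarrow>\<^sub>E S T) \<le> card \<T> * c ^ card A"
proof -
  have "card (\<Union>T\<in>\<T>. A \<rightarrow>\<^sub>E S T) \<le> (\<Sum>T\<in>\<T>. card (S T) ^ card A)"
    using card_UN_le[OF \<open>finite \<T>\<close>, of "\<lambda>T. A \<rightarrow>\<^sub>E S T"] \<open>finite A\<close> by (simp add: card_PiE)
  then have "real (card (\<Union>T\<in>\<T>. A \<rightarrow>\<^sub>E S T)) \<le> (\<Sum>T\<in>\<T>. real (card (S T)) ^ card A)"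
    by (simp flip: of_nat_power of_nat_sum)
  also have "\<dots> \<le> (\<Sum>T\<in>\<T>. c ^ card A)"
    using assms(4) by (intro sum_mono power_mono) auto
  finally show ?thesis
    by simp
qed

definition near_monochromatic :: "nat \<Rightarrow> nat \<Rightarrow> real \<Rightarrow> (nat \<Rightarrow> nat) set" where
  "near_monochromatic q N \<delta> =
     {x \<in> configs q N. \<exists>c. real (card {v \<in> {0..<N}. x v \<noteq> c}) < \<delta> * real N}"

lemma card_hyperedges_touching_le:
  assumes "T \<subseteq> {0..<N}"
  shows "card {e \<in> hyperedges N 2. e 0 \<in> T \<or> e 1 \<in> T} \<le> 2 * card T * N"
proof -
  have "card {e \<in> hyperedges N 2. e 0 \<in> T \<or> e 1 \<in> T}
          = card {(u, v) \<in> {0..<N} \<times> {0..<N}. u \<in> T \<or> v \<in> T}"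
    by (rule card_hyperedges_2_filter)
  also have "\<dots> \<le> card (T \<times> {0..<N} \<union> {0..<N} \<times> T)"
    using finite_subset[OF assms] by (intro card_mono) auto
  also have "\<dots> \<le> card (T \<times> {0..<N}) + card ({0..<N} \<times> T)"
    by (rule card_Un_le)
  finally show ?thesis
    by (simp add: card_cartesian_product mult_ac)
qed

lemma card_col_near_monochromatic_le:
  fixes \<delta> :: real
  assumes "0 < \<delta>" and "\<delta> < 1/2"
  shows "card (sat_instances (hyperedges N 2) col_He (near_monochromatic q N \<delta>) M)
           \<le> exp (entropy \<delta> * N) * (2 * \<delta> * real N ^ 2) ^ M"
proof -
  define \<T> where "\<T> = {T. T \<subseteq> {0..<N} \<and> card T < \<delta> * N}"
  define touching where "touching T = {e \<in> hyperedges N 2. e 0 \<in> T \<or> e 1 \<in> T}" for T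
  have "sat_instances (hyperedges N 2) col_He (near_monochromatic q N \<delta>) M
          \<subseteq> (\<Union>T\<in>\<T>. {0..<M} \<rightarrow>\<^sub>E touching T)"
  proof
    fix G assume "G \<in> sat_instances (hyperedges N 2) col_He (near_monochromatic q N \<delta>) M"
    then obtain x c where G: "G \<in> {0..<M} \<rightarrow>\<^sub>E hyperedges N 2" and sat: "\<forall>i<M. col_He (G i) x = 1"
      and c: "card {v \<in> {0..<N}. x v \<noteq> c} < \<delta> * N"
      unfolding sat_instances_def near_monochromatic_def by blast
    have "G i \<in> touching {v \<in> {0..<N}. x v \<noteq> c}" if "i < M" for i
      using PiE_mem[OF G, of i] sat that
      by (auto simp: touching_def col_He_def hyperedges_def PiE_iff split: if_splits)
    then have "G \<in> {0..<M} \<rightarrow>\<^sub>E touching {v \<in> {0..<N}. x v \<noteq> c}"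
      using G by (auto simp: PiE_iff)
    moreover have "{v \<in> {0..<N}. x v \<noteq> c} \<in> \<T>"
      using c by (auto simp: \<T>_def)
    ultimately show "G \<in> (\<Union>T\<in>\<T>. {0..<M} \<rightarrow>\<^sub>E touching T)"
      by blast
  qed
  then have "real (card (sat_instances (hyperedges N 2) col_He (near_monochromatic q N \<delta>) M))
               \<le> card (\<Union>T\<in>\<T>. {0..<M} \<rightarrow>\<^sub>E touching T)"
    unfolding of_nat_le_iff by (intro card_mono) (auto simp: \<T>_def touching_def finite_hyperedges finite_PiE)
  also have "\<dots> \<le> card \<T> * (2 * \<delta> * real N ^ 2) ^ M"
  proof (rule card_UN_PiE_le[where A="{0..<M}", simplified])
    show "finite \<T>"
      unfolding \<T>_def by (rule finite_subset[of _ "Pow {0..<N}"]) auto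
    show "finite (touching T)" for T
      by (simp add: touching_def finite_hyperedges)
    show "card (touching T) \<le> 2 * \<delta> * real N ^ 2" if "T \<in> \<T>" for T
    proof -
      have "card (touching T) \<le> 2 * card T * N"
        using that card_hyperedges_touching_le by (auto simp: \<T>_def touching_def)
      then have "real (card (touching T)) \<le> 2 * real (card T) * N"
        by (metis of_nat_le_iff of_nat_mult of_nat_numeral)
      also have "\<dots> \<le> 2 * (\<delta> * N) * N"
        using that by (intro mult_right_mono mult_left_mono) (auto simp: \<T>_def)
      finally show ?thesis
        by (simp add: power2_eq_square mult_ac)
    qed
  qed
  also have "\<dots> \<le> exp (entropy \<delta> * N) * (2 * \<delta> * real N ^ 2) ^ M"
    using card_small_subsets_le[OF assms, of N] assms by (intro mult_right_mono) (auto simp: \<T>_def)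
  finally show ?thesis .
qed

lemma p_col_add_ge:
  fixes \<delta> :: real
  assumes "0 < q" and "0 < \<delta>" and "\<delta> < 1/2" and "0 < N"
  shows "\<delta> ^ m * p_col q N M - (2 * \<delta>) ^ M * exp (entropy \<delta> * N) \<le> p_col q N (M + m)"
proof -
  have "near_monochromatic q N \<delta> \<subseteq> configs q N"
    by (auto simp: near_monochromatic_def)
  moreover have "\<delta> * card (hyperedges N 2) \<le> card {e \<in> hyperedges N 2. col_He e x = 1}"
    if "x \<in> configs q N - near_monochromatic q N \<delta>" for x
    using that by (intro card_col_satisfied_ge) (auto simp: near_monochromatic_def not_less)
  ultimately have "\<delta> ^ m * p_col q N M
      - card (sat_instances (hyperedges N 2) col_He (near_monochromatic q N \<delta>) M) / card (hyperedges N 2) ^ M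
      \<le> p_col q N (M + m)"
    unfolding p_col_def using assms
    by (intro pM_add_ge finite_hyperedges hyperedges_nonempty) (auto simp: col_He_def)
  moreover have "card (sat_instances (hyperedges N 2) col_He (near_monochromatic q N \<delta>) M)
                   / card (hyperedges N 2) ^ M \<le> (2 * \<delta>) ^ M * exp (entropy \<delta> * N)"
    using card_col_near_monochromatic_le[OF assms(2,3), of N q M] \<open>0 < N\<close>
    by (simp add: card_hyperedges_2 divide_le_eq power_mult_distrib mult_ac)
  ultimately show ?thesis
    by linarith
qed

lemma p_sat_add_ge:
  fixes \<delta> :: real
  assumes "K \<ge> 2" and "0 \<le> \<delta>" and "\<delta> \<le> 1/2" and "0 < N"
  shows "\<delta> ^ m * p_sat K N M \<le> p_sat K N (M + m)"
proof -
  have "\<delta> * card (clauses N K) \<le> card {e \<in> clauses N K. sat_He K e x = 1}" for x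
    using card_sat_violated_le assms
    by (intro card_satisfied_ge double_le_card_clauses) (auto simp: finite_hyperedges finite_PiE)
  then have "\<delta> ^ m * p_sat K N M - card (sat_instances (clauses N K) (sat_He K) {} M) / card (clauses N K) ^ M
               \<le> p_sat K N (M + m)"
    unfolding p_sat_def using assms hyperedges_nonempty[of N K]
    by (intro pM_add_ge) (auto simp: finite_hyperedges finite_PiE sat_He_def PiE_eq_empty_iff)
  then show ?thesis
    by (simp add: sat_instances_def)
qed

lemma p_nae_add_ge:
  fixes \<delta> :: real
  assumes "K \<ge> 2" and "0 \<le> \<delta>" and "\<delta> \<le> 1/2" and "0 < N"
  shows "\<delta> ^ m * p_nae K N M \<le> p_nae K N (M + m)"
proof -
  have "\<delta> * card (clauses N K) \<le> card {e \<in> clauses N K. nae_He K e x = 1}" for x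
    using card_nae_violated_le assms
    by (intro card_satisfied_ge double_le_card_clauses) (auto simp: finite_hyperedges finite_PiE)
  then have "\<delta> ^ m * p_nae K N M - card (sat_instances (clauses N K) (nae_He K) {} M) / card (clauses N K) ^ M
               \<le> p_nae K N (M + m)"
    unfolding p_nae_def using assms hyperedges_nonempty[of N K]
    by (intro pM_add_ge) (auto simp: finite_hyperedges finite_PiE nae_He_def PiE_eq_empty_iff)
  then show ?thesis
    by (simp add: sat_instances_def)
qed

theorem lemma3:
  fixes q K :: nat and \<delta> :: real
  assumes "q \<ge> 2" and "K \<ge> 2" and "0 < \<delta>" and "\<delta> < 1/2"
  shows "(\<exists>e :: nat \<Rightarrow> real. e \<in> o(\<lambda>N. real N) \<and>
           (\<forall>N M m. 0 < N \<longrightarrow> 0 < M \<longrightarrow> 0 < m \<longrightarrow>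
              p_col q N (M + m) \<ge> \<delta> ^ m * p_col q N M
                 - (2 * \<delta>) ^ (M + 1) * exp (entropy \<delta> * real N + e N)))
       \<and> (\<exists>e :: nat \<Rightarrow> real. e \<in> o(\<lambda>N. real N) \<and>
           (\<forall>N M m. 0 < N \<longrightarrow> 0 < M \<longrightarrow> 0 < m \<longrightarrow>
              p_sat K N (M + m) \<ge> \<delta> ^ m * p_sat K N M
                 - (2 * \<delta>) ^ (M + 1) * exp (entropy \<delta> * real N + e N)))
       \<and> (\<exists>e :: nat \<Rightarrow> real. e \<in> o(\<lambda>N. real N) \<and>
           (\<forall>N M m. 0 < N \<longrightarrow> 0 < M \<longrightarrow> 0 < m \<longrightarrow>
              p_nae K N (M + m) \<ge> \<delta> ^ m * p_nae K N M
                 - (2 * \<delta>) ^ (M + 1) * exp (entropy \<delta> * real N + e N)))"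
proof -
  have const: "(\<lambda>_. c) \<in> o(\<lambda>N. real N)" for c :: real
    by real_asymp
  text \<open>The constant error term \<open>- ln (2 \<delta>)\<close> absorbs the extra factor \<open>2 \<delta>\<close>.\<close>
  have shift: "(2 * \<delta>) ^ M * exp (entropy \<delta> * N)
                 = (2 * \<delta>) ^ (M + 1) * exp (entropy \<delta> * N + - ln (2 * \<delta>))" for M N :: nat
    using \<open>0 < \<delta>\<close> by (simp add: exp_diff field_simps)
  have nonneg: "0 \<le> (2 * \<delta>) ^ (M + 1) * exp (entropy \<delta> * N + 0)" for M N :: nat
    using \<open>0 < \<delta>\<close> by simp
  have col: "\<forall>N M m. 0 < N \<longrightarrow> 0 < M \<longrightarrow> 0 < m \<longrightarrow> p_col q N (M + m) \<ge> \<delta> ^ m * p_col q N M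
               - (2 * \<delta>) ^ (M + 1) * exp (entropy \<delta> * real N + - ln (2 * \<delta>))"
    using p_col_add_ge[of q \<delta>, unfolded shift] assms by simp
  have sat: "\<forall>N M m. 0 < N \<longrightarrow> 0 < M \<longrightarrow> 0 < m \<longrightarrow> p_sat K N (M + m) \<ge> \<delta> ^ m * p_sat K N M
               - (2 * \<delta>) ^ (M + 1) * exp (entropy \<delta> * real N + 0)"
    using p_sat_add_ge[of K \<delta>] nonneg assms by (smt (verit))
  have nae: "\<forall>N M m. 0 < N \<longrightarrow> 0 < M \<longrightarrow> 0 < m \<longrightarrow> p_nae K N (M + m) \<ge> \<delta> ^ m * p_nae K N M
               - (2 * \<delta>) ^ (M + 1) * exp (entropy \<delta> * real N + 0)"
    using p_nae_add_ge[of K \<delta>] nonneg assms by (smt (verit))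
  show ?thesis
    by (intro conjI; rule exI, rule conjI[OF const]) (fact col sat nae)+
qed
end
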